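(* Let $G$ be a finite group with $|G|\ge4$, $\sigma$ an automorphism of $G$ of order two, and $S$ a symmetric subset of $G$. Let $X$ be one of $C_\Sigma(G,S)$, $C(G,S)^\sigma$, $C_\Sigma(G,S)^\sigma$, and suppose $X$ is undirected. Then $X$ is connected if and only if $S$ generates $G$.
   Context: $C_\Sigma(G,S)$ has vertex set $G$ and an edge from $x$ to $x^{-1}s$ for each $s\in S$; $C(G,S)^\sigma$ has an edge from $x$ to $\sigma(xs)$; $C_\Sigma(G,S)^\sigma$ has an edge from $x$ to $\sigma(x^{-1}s)$. A graph is undirected if its adjacency matrix is symmetric. *)

theory Defs
  imports "HOL-Algebra.Generated_Groups"
begin

text \<open>A (multi)digraph on a vertex set, given by an edge function f:
  each vertex x has, for every s in S, one edge from x to f x s.\<close>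

definition adj_count :: "('a \<Rightarrow> 'a \<Rightarrow> 'a) \<Rightarrow> 'a set \<Rightarrow> 'a \<Rightarrow> 'a \<Rightarrow> nat" where
  "adj_count f S x y = card {s \<in> S. f x s = y}"

definition undirected_graph :: "('a \<Rightarrow> 'a \<Rightarrow> 'a) \<Rightarrow> 'a set \<Rightarrow> 'a set \<Rightarrow> bool" where
  "undirected_graph f S V \<longleftrightarrow> (\<forall>x\<in>V. \<forall>y\<in>V. adj_count f S x y = adj_count f S y x)"

definition edge_rel :: "('a \<Rightarrow> 'a \<Rightarrow> 'a) \<Rightarrow> 'a set \<Rightarrow> 'a set \<Rightarrow> ('a \<times> 'a) set" where
  "edge_rel f S V = {(x, y). x \<in> V \<and> y \<in> V \<and> adj_count f S x y > 0}"

definition connected_graph :: "('a \<Rightarrow> 'a \<Rightarrow> 'a) \<Rightarrow> 'a set \<Rightarrow> 'a set \<Rightarrow> bool" where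
  "connected_graph f S V \<longleftrightarrow> (\<forall>x\<in>V. \<forall>y\<in>V. (x, y) \<in> (edge_rel f S V)\<^sup>*)"

text \<open>Edge functions: C_Sigma(G,S): x -> x^{-1}s; C(G,S)^sigma: x -> sigma(xs);
  C_Sigma(G,S)^sigma: x -> sigma(x^{-1}s).\<close>

definition cay_sum :: "('a, 'b) monoid_scheme \<Rightarrow> 'a \<Rightarrow> 'a \<Rightarrow> 'a" where
  "cay_sum G x s = inv\<^bsub>G\<^esub> x \<otimes>\<^bsub>G\<^esub> s"

definition cay_twist :: "('a, 'b) monoid_scheme \<Rightarrow> ('a \<Rightarrow> 'a) \<Rightarrow> 'a \<Rightarrow> 'a \<Rightarrow> 'a" where
  "cay_twist G \<sigma> x s = \<sigma> (x \<otimes>\<^bsub>G\<^esub> s)"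

definition cay_sum_twist :: "('a, 'b) monoid_scheme \<Rightarrow> ('a \<Rightarrow> 'a) \<Rightarrow> 'a \<Rightarrow> 'a \<Rightarrow> 'a" where
  "cay_sum_twist G \<sigma> x s = \<sigma> (inv\<^bsub>G\<^esub> x \<otimes>\<^bsub>G\<^esub> s)"

end

theory Submission
  imports Defs
begin

text \<open>All three graphs join x to \<phi>(x) \<tau>(s) for a permutation \<phi> of G fixing 1 and a
  permutation \<tau> of S: (\<phi>, \<tau>) is (x \<mapsto> x\<inverse>, id), (\<sigma>, \<sigma>) and (x \<mapsto> \<sigma>(x\<inverse>), \<sigma>) respectively.
  For the two twisted graphs this needs \<sigma>(S) = S, which undirectedness forces: every s \<in> S
  has an edge to 1, while the out-neighbours of 1 are \<sigma>(S).
  In such a graph the neighbours of 1 are exactly S, and x is joined to x s t through the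
  common neighbour w with \<phi>(w) = x s; if S generates G, every vertex is therefore reachable
  from 1. Conversely \<langle>S\<rangle> contains 1 and is closed under edges (as \<phi> preserves it),
  so connectedness forces \<langle>S\<rangle> = G.\<close>

lemma sym_edge_rel:
  assumes "undirected_graph X S V"
  shows "sym (edge_rel X S V)"
  using assms unfolding undirected_graph_def edge_rel_def sym_def by auto

lemma edge_rel_iff:
  assumes "finite S"
  shows "(x, y) \<in> edge_rel X S V \<longleftrightarrow> x \<in> V \<and> y \<in> V \<and> (\<exists>s\<in>S. X x s = y)"
  using assms by (auto simp: edge_rel_def adj_count_def card_gt_0_iff)

lemma connected_graphI:
  assumes "sym (edge_rel X S V)" "v \<in> V"
    and "\<And>y. y \<in> V \<Longrightarrow> (v, y) \<in> (edge_rel X S V)\<^sup>*"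
  shows "connected_graph X S V"
  unfolding connected_graph_def
proof (intro ballI)
  fix x y assume "x \<in> V" "y \<in> V"
  have "(x, v) \<in> (edge_rel X S V)\<^sup>*"
    using symD[OF sym_rtrancl[OF assms(1)]] assms(3)[OF \<open>x \<in> V\<close>] .
  then show "(x, y) \<in> (edge_rel X S V)\<^sup>*"
    using assms(3)[OF \<open>y \<in> V\<close>] by (rule rtrancl_trans)
qed

lemma connected_graph_subset_closed:
  assumes "connected_graph X S V" "v \<in> V" "v \<in> H"
    and "\<And>x s. x \<in> H \<Longrightarrow> s \<in> S \<Longrightarrow> X x s \<in> H"
  shows "V \<subseteq> H"
proof
  fix y assume "y \<in> V"
  then have "(v, y) \<in> (edge_rel X S V)\<^sup>*"
    using assms(1,2) by (simp add: connected_graph_def)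
  then show "y \<in> H"
  proof induct
    case base
    show ?case by (fact assms(3))
  next
    case (step x y)
    then obtain s where "s \<in> S" "X x s = y"
      by (auto simp: edge_rel_def adj_count_def card_gt_0_iff)
    then show ?case using step.hyps(3) assms(4) by blast
  qed
qed

lemma undirected_graph_involution_image_eq:
  assumes "finite S" "undirected_graph X S V" "S \<subseteq> V" "v \<in> V"
    and "\<And>s. s \<in> S \<Longrightarrow> \<sigma> (\<sigma> s) = s"
    and "\<And>t. t \<in> S \<Longrightarrow> X v t = \<sigma> t"
    and "\<And>s. s \<in> S \<Longrightarrow> \<exists>t\<in>S. X s t = v"
  shows "\<sigma> ` S = S"
proof -
  have "\<sigma> s \<in> S" if "s \<in> S" for s
  proof -
    have "(s, v) \<in> edge_rel X S V"
      using assms(3,4,7) that by (auto simp: edge_rel_iff[OF assms(1)])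
    then have "(v, s) \<in> edge_rel X S V"
      by (rule symD[OF sym_edge_rel[OF assms(2)]])
    then obtain t where "t \<in> S" "\<sigma> t = s"
      using assms(6) by (auto simp: edge_rel_iff[OF assms(1)])
    then show ?thesis using assms(5) by auto
  qed
  then show ?thesis using assms(5) by (auto simp: image_iff) metis
qed

lemma (in group) inv_image_carrier: "m_inv G ` carrier G = carrier G"
  by (auto simp: image_iff) (metis inv_closed inv_inv)

lemma (in group) generate_right_mult_closed:
  assumes "S \<subseteq> carrier G" "\<forall>s\<in>S. inv s \<in> S" "A \<subseteq> carrier G"
    and "\<And>a s. a \<in> A \<Longrightarrow> s \<in> S \<Longrightarrow> a \<otimes> s \<in> A"
    and "h \<in> generate G S" "a \<in> A"
  shows "a \<otimes> h \<in> A"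
  using assms(5,6)
proof (induction arbitrary: a)
  case one
  then show ?case using assms(3) by auto
next
  case (incl h)
  then show ?case using assms(4) by blast
next
  case (inv h)
  then show ?case using assms(2,4) by blast
next
  case (eng h1 h2)
  have "a \<otimes> (h1 \<otimes> h2) = a \<otimes> h1 \<otimes> h2"
    using eng.prems eng.hyps assms(1,3) by (auto simp: m_assoc generate_in_carrier)
  then show ?case using eng.IH eng.prems by simp
qed

locale generalized_cayley_graph = group G for G (structure) +
  fixes S :: "'a set" and X :: "'a \<Rightarrow> 'a \<Rightarrow> 'a" and \<phi> \<tau> :: "'a \<Rightarrow> 'a"
  assumes finite_S: "finite S" and S_carrier: "S \<subseteq> carrier G" and inv_S: "\<forall>s\<in>S. inv s \<in> S"
    and X_eq: "\<And>x s. x \<in> carrier G \<Longrightarrow> s \<in> S \<Longrightarrow> X x s = \<phi> x \<otimes> \<tau> s"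
    and \<phi>_carrier: "\<phi> ` carrier G = carrier G" and \<phi>_one: "\<phi> \<one> = \<one>"
    and \<tau>_S: "\<tau> ` S = S"
begin

lemma edge_rel_X:
  assumes "x \<in> carrier G" "s \<in> S"
  shows "(x, X x s) \<in> edge_rel X S (carrier G)"
proof -
  have "\<phi> x \<in> carrier G" using imageI[OF assms(1), of \<phi>] by (simp only: \<phi>_carrier)
  moreover have "\<tau> s \<in> carrier G" using imageI[OF assms(2), of \<tau>] S_carrier by (auto simp: \<tau>_S)
  ultimately show ?thesis
    using assms X_eq[OF assms] by (auto simp: edge_rel_iff[OF finite_S])
qed

lemma \<tau>_preimage:
  assumes "s \<in> S"
  obtains u where "u \<in> S" "\<tau> u = s"
proof -
  have "s \<in> \<tau> ` S" using assms by (simp only: \<tau>_S)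
  then show ?thesis using that by blast
qed

lemma rtrancl_one_S:
  assumes "s \<in> S"
  shows "(\<one>, s) \<in> (edge_rel X S (carrier G))\<^sup>*"
proof -
  obtain u where u: "u \<in> S" "\<tau> u = s" using \<tau>_preimage[OF assms] .
  then have "X \<one> u = s" using X_eq[OF one_closed u(1)] \<phi>_one assms S_carrier by auto
  then show ?thesis using edge_rel_X[OF one_closed u(1)] by auto
qed

lemma rtrancl_mult2:
  assumes "undirected_graph X S (carrier G)" "x \<in> carrier G" "s \<in> S" "t \<in> S"
  shows "(x, x \<otimes> s \<otimes> t) \<in> (edge_rel X S (carrier G))\<^sup>*"
proof -
  have s: "s \<in> carrier G" "inv s \<in> S" using assms(3) S_carrier inv_S by auto
  have "x \<otimes> s \<in> \<phi> ` carrier G" using \<phi>_carrier assms(2) s(1) by simp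
  then obtain w where w: "w \<in> carrier G" "\<phi> w = x \<otimes> s" by auto
  obtain u where u: "u \<in> S" "\<tau> u = inv s" using \<tau>_preimage[OF s(2)] .
  obtain v where v: "v \<in> S" "\<tau> v = t" using \<tau>_preimage[OF assms(4)] .
  have "X w u = x" using X_eq[OF w(1) u(1)] w(2) u(2) assms(2) s(1) by (simp add: m_assoc)
  then have "(x, w) \<in> edge_rel X S (carrier G)"
    using symD[OF sym_edge_rel[OF assms(1)] edge_rel_X[OF w(1) u(1)]] by simp
  moreover have "(w, x \<otimes> s \<otimes> t) \<in> edge_rel X S (carrier G)"
    using edge_rel_X[OF w(1) v(1)] X_eq[OF w(1) v(1)] w(2) v(2) by simp
  ultimately show ?thesis by auto
qed

lemma connected_if_generate:
  assumes "undirected_graph X S (carrier G)" "generate G S = carrier G"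
  shows "connected_graph X S (carrier G)"
proof -
  let ?R = "edge_rel X S (carrier G)"
  \<comment> \<open>Steps x \<mapsto> x s t only reach words of even length; also tracking g s covers odd ones.\<close>
  define A where "A = {g \<in> carrier G. (\<one>, g) \<in> ?R\<^sup>* \<and> (\<forall>s\<in>S. (\<one>, g \<otimes> s) \<in> ?R\<^sup>*)}"
  have "\<one> \<in> A" using rtrancl_one_S S_carrier by (auto simp: A_def)
  moreover have "g \<otimes> t \<in> A" if "g \<in> A" "t \<in> S" for g t
  proof -
    have g: "g \<in> carrier G" "(\<one>, g) \<in> ?R\<^sup>*" "(\<one>, g \<otimes> t) \<in> ?R\<^sup>*"
      using that by (auto simp: A_def)
    have "(\<one>, g \<otimes> t \<otimes> s) \<in> ?R\<^sup>*" if "s \<in> S" for s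
      using g(2) rtrancl_mult2[OF assms(1) g(1) \<open>t \<in> S\<close> that] by (rule rtrancl_trans)
    then show ?thesis using g(1,3) \<open>t \<in> S\<close> S_carrier by (auto simp: A_def)
  qed
  ultimately have "h \<in> A" if "h \<in> carrier G" for h
    using generate_right_mult_closed[OF S_carrier inv_S, of A h \<one>] that assms(2)
    by (simp add: A_def)
  then show ?thesis
    by (intro connected_graphI[OF sym_edge_rel[OF assms(1)] one_closed]) (auto simp: A_def)
qed

lemma generate_if_connected:
  assumes "\<phi> ` generate G S \<subseteq> generate G S" "connected_graph X S (carrier G)"
  shows "generate G S = carrier G"
proof -
  have "carrier G \<subseteq> generate G S"
  proof (rule connected_graph_subset_closed[OF assms(2) one_closed generate.one])
    fix x s assume x: "x \<in> generate G S" and s: "s \<in> S"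
    then have "\<phi> x \<in> generate G S" "\<tau> s \<in> generate G S"
      using assms(1) \<tau>_S by (auto intro: generate.incl)
    then show "X x s \<in> generate G S"
      using X_eq[OF generate_in_carrier[OF S_carrier x] s] by (simp add: generate.eng)
  qed
  then show ?thesis using generate_incl[OF S_carrier] by blast
qed

lemma connected_iff_generate:
  assumes "undirected_graph X S (carrier G)" "\<phi> ` generate G S \<subseteq> generate G S"
  shows "connected_graph X S (carrier G) \<longleftrightarrow> generate G S = carrier G"
  using connected_if_generate[OF assms(1)] generate_if_connected[OF assms(2)] by blast

end

lemma (in group) connected_cay_sum_iff:
  assumes "finite S" "S \<subseteq> carrier G" "\<forall>s\<in>S. inv s \<in> S"
    and "undirected_graph (cay_sum G) S (carrier G)"
  shows "connected_graph (cay_sum G) S (carrier G) \<longleftrightarrow> generate G S = carrier G"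
proof -
  interpret generalized_cayley_graph G S "cay_sum G" "m_inv G" id
    using assms(1-3) by unfold_locales (auto simp: cay_sum_def inv_image_carrier)
  show ?thesis
    using assms(4) generate_m_inv_closed[OF assms(2)] by (intro connected_iff_generate) auto
qed

lemma (in group) connected_cay_twist_iff:
  assumes "finite S" "S \<subseteq> carrier G" "\<forall>s\<in>S. inv s \<in> S"
    and "\<sigma> \<in> iso G G" "\<forall>x\<in>carrier G. \<sigma> (\<sigma> x) = x"
    and "undirected_graph (cay_twist G \<sigma>) S (carrier G)"
  shows "connected_graph (cay_twist G \<sigma>) S (carrier G) \<longleftrightarrow> generate G S = carrier G"
proof -
  interpret \<sigma>: group_hom G G \<sigma>
    using assms(4) by (simp add: group_hom_def group_hom_axioms_def iso_def is_group)
  have \<sigma>_S: "\<sigma> ` S = S"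
  proof (rule undirected_graph_involution_image_eq[OF assms(1,6,2) one_closed])
    fix s assume s: "s \<in> S"
    then show "\<sigma> (\<sigma> s) = s" using assms(2,5) by auto
    show "cay_twist G \<sigma> \<one> s = \<sigma> s" using s assms(2) by (auto simp: cay_twist_def)
    show "\<exists>t\<in>S. cay_twist G \<sigma> s t = \<one>"
      using s assms(2,3) by (auto simp: cay_twist_def intro!: bexI[of _ "inv s"])
  qed
  interpret generalized_cayley_graph G S "cay_twist G \<sigma>" \<sigma> \<sigma>
    using assms(1-4) \<sigma>_S by unfold_locales (auto simp: cay_twist_def iso_def bij_betw_def)
  show ?thesis
    using assms(6) \<sigma>.generate_img[OF assms(2)] \<sigma>_S by (intro connected_iff_generate) auto
qed

lemma (in group) connected_cay_sum_twist_iff: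
  assumes "finite S" "S \<subseteq> carrier G" "\<forall>s\<in>S. inv s \<in> S"
    and "\<sigma> \<in> iso G G" "\<forall>x\<in>carrier G. \<sigma> (\<sigma> x) = x"
    and "undirected_graph (cay_sum_twist G \<sigma>) S (carrier G)"
  shows "connected_graph (cay_sum_twist G \<sigma>) S (carrier G) \<longleftrightarrow> generate G S = carrier G"
proof -
  interpret \<sigma>: group_hom G G \<sigma>
    using assms(4) by (simp add: group_hom_def group_hom_axioms_def iso_def is_group)
  have \<sigma>_S: "\<sigma> ` S = S"
  proof (rule undirected_graph_involution_image_eq[OF assms(1,6,2) one_closed])
    fix s assume s: "s \<in> S"
    then show "\<sigma> (\<sigma> s) = s" using assms(2,5) by auto
    show "cay_sum_twist G \<sigma> \<one> s = \<sigma> s" using s assms(2) by (auto simp: cay_sum_twist_def)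
    show "\<exists>t\<in>S. cay_sum_twist G \<sigma> s t = \<one>"
      using s assms(2) by (auto simp: cay_sum_twist_def intro!: bexI[of _ s])
  qed
  have "(\<lambda>x. \<sigma> (inv x)) ` carrier G = \<sigma> ` m_inv G ` carrier G"
    by (simp only: image_image)
  also have "\<dots> = carrier G"
    using assms(4) by (simp add: inv_image_carrier iso_def bij_betw_def)
  finally interpret generalized_cayley_graph G S "cay_sum_twist G \<sigma>" "\<lambda>x. \<sigma> (inv x)" \<sigma>
    using assms(1-3) \<sigma>_S by unfold_locales (auto simp: cay_sum_twist_def)
  show ?thesis
    using assms(6) \<sigma>.generate_img[OF assms(2)] \<sigma>_S generate_m_inv_closed[OF assms(2)]
    by (intro connected_iff_generate) auto
qed

theorem corollary2p7:
  fixes G :: "('a, 'b) monoid_scheme" and \<sigma> :: "'a \<Rightarrow> 'a" and S :: "'a set"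
    and X :: "'a \<Rightarrow> 'a \<Rightarrow> 'a"
  assumes "group G"
    and "finite (carrier G)"
    and "card (carrier G) \<ge> 4"
    and "\<sigma> \<in> iso G G"
    and "\<forall>x\<in>carrier G. \<sigma> (\<sigma> x) = x"
    and "\<exists>x\<in>carrier G. \<sigma> x \<noteq> x"
    and "S \<subseteq> carrier G"
    and "\<forall>s\<in>S. inv\<^bsub>G\<^esub> s \<in> S"
    and "X \<in> {cay_sum G, cay_twist G \<sigma>, cay_sum_twist G \<sigma>}"
    and "undirected_graph X S (carrier G)"
  shows "connected_graph X S (carrier G) \<longleftrightarrow> generate G S = carrier G"
proof -
  interpret group G by (fact assms(1))
  have "finite S" using assms(2,7) by (rule finite_subset[rotated])
  from assms(9) consider "X = cay_sum G" | "X = cay_twist G \<sigma>" | "X = cay_sum_twist G \<sigma>"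
    by blast
  then show ?thesis
    using connected_cay_sum_iff connected_cay_twist_iff connected_cay_sum_twist_iff
      \<open>finite S\<close> assms(4,5,7,8,10)
    by cases simp_all
qed

end
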